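(* Let $q\in[0,1)$, $\beta>0$, and $s_0,s_1\in(-1,0)$ with $|s_0|>|s_1|$. Fix integers $x_1(0)>x_2(0)$. Let $\mathbf{x}(t)=(x_1(t),x_2(t))$ be the two-particle system with parameters $(s_0,s_1)$ started from $(x_1(0),x_2(0))$. Let $y_1'(0)$, with $x_2(0)<y_1'(0)\le x_1(0)$, be random with distribution $$\mathbb{P}(y_1'(0)=y)=\varphi_{q,s_1^2/s_0^2,\,s_1^2}\bigl(y-x_2(0)-1\mid x_1(0)-x_2(0)-1\bigr),$$ and let $\mathbf{y}(t)=(y_1(t),y_2(t))$ be the two-particle system with parameters $(s_1,s_0)$ started from $(y_1'(0),x_2(0))$. Then the trajectories of the second particle, $\{x_2(t)\}_{t\in\mathbb{Z}_{\ge0}}$ and $\{y_2(t)\}_{t\in\mathbb{Z}_{\ge0}}$, have the same distribution.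
   Context: $(a;q)_k=\prod_{i=0}^{k-1}(1-aq^i)$. For $0\le j\le m$: $\varphi_{q,\mu,\nu}(j\mid m)=\mu^j\frac{(\nu/\mu;q)_j(\mu;q)_{m-j}}{(\nu;q)_m}\frac{(q;q)_m}{(q;q)_j(q;q)_{m-j}}$, where $\mu^j(\nu/\mu;q)_j$ means $\prod_{i=0}^{j-1}(\mu-\nu q^i)$. Two-particle system with parameters $(\sigma_1,\sigma_2)$ (with $\sigma_i\in(-1,0)$, and $\beta$, $q$ fixed): a discrete-time Markov chain on pairs of integers $x_1(t)>x_2(t)$. At each step, first $x_1$ jumps right by $h_0\in\{0,1\}$ with $\mathbb{P}(h_0=1)=\frac{\beta\sigma_1^2}{1+\beta\sigma_1^2}$. Then, with $g=x_1(t)-x_2(t)-1$, the particle $x_2$ jumps right by $h_1\in\{0,1\}$ with $\mathbb{P}(h_1=1\mid h_0=0)=\frac{\beta\sigma_2^2(1-q^g)}{1+\beta\sigma_2^2}$ and $\mathbb{P}(h_1=1\mid h_0=1)=\frac{\beta\sigma_2^2+q^g\sigma_2^2}{1+\beta\sigma_2^2}$ (with $0^0=1$). *)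

theory Defs
  imports "HOL-Probability.Probability"
begin

definition qpoch :: "real \<Rightarrow> real \<Rightarrow> nat \<Rightarrow> real" where
  "qpoch a q k = (\<Prod>i<k. 1 - a * q ^ i)"

text \<open>phi_{q,mu,nu}(j | m), where mu^j (nu/mu;q)_j is read as prod_{i<j} (mu - nu q^i).\<close>
definition phi :: "real \<Rightarrow> real \<Rightarrow> real \<Rightarrow> nat \<Rightarrow> nat \<Rightarrow> real" where
  "phi q \<mu> \<nu> j m =
     (\<Prod>i<j. \<mu> - \<nu> * q ^ i) * qpoch \<mu> q (m - j) / qpoch \<nu> q m
     * (qpoch q q m / (qpoch q q j * qpoch q q (m - j)))"

definition step :: "real \<Rightarrow> real \<Rightarrow> real \<Rightarrow> real \<Rightarrow> int \<times> int \<Rightarrow> (int \<times> int) pmf" where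
  "step \<beta> q \<sigma>1 \<sigma>2 s =
     (let x1 = fst s; x2 = snd s; g = nat (x1 - x2 - 1) in
      bind_pmf (bernoulli_pmf (\<beta> * \<sigma>1\<^sup>2 / (1 + \<beta> * \<sigma>1\<^sup>2))) (\<lambda>h0.
      bind_pmf (bernoulli_pmf
                 (if h0 then (\<beta> * \<sigma>2\<^sup>2 + q ^ g * \<sigma>2\<^sup>2) / (1 + \<beta> * \<sigma>2\<^sup>2)
                  else \<beta> * \<sigma>2\<^sup>2 * (1 - q ^ g) / (1 + \<beta> * \<sigma>2\<^sup>2))) (\<lambda>h1.
      return_pmf (x1 + of_bool h0, x2 + of_bool h1))))"

fun traj :: "real \<Rightarrow> real \<Rightarrow> real \<Rightarrow> real \<Rightarrow> nat \<Rightarrow> int \<times> int \<Rightarrow> (int \<times> int) list pmf" where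
  "traj \<beta> q \<sigma>1 \<sigma>2 0 s = return_pmf [s]"
| "traj \<beta> q \<sigma>1 \<sigma>2 (Suc n) s =
     bind_pmf (step \<beta> q \<sigma>1 \<sigma>2 s) (\<lambda>s'. map_pmf (Cons s) (traj \<beta> q \<sigma>1 \<sigma>2 n s'))"

end

theory Submission
  imports Defs
begin

(* Write m = x1 - x2 - 1 for the gap of the x-system and let Lambda(m, .) = phi_{q, s1^2/s0^2, s1^2}(. | m)
   be the law of y1 - x2 - 1.  The heart of the proof is an intertwining relation: moving x2 with the
   x-chain at gap m and then redistributing y1 by Lambda at the new gap is the same as redistributing
   y1 by Lambda(m, .) first and then moving y2 = x2 with the y-chain.  After multiplying the one-step
   probabilities of both chains by the common factor (1 + beta s0^2)(1 + beta s1^2) they become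
   polynomials, and the relation splits, according to whether the second particle jumps, into two
   identities for each offset k; with u = q^j, w = q^n these are polynomial consequences of the two
   contiguity relations of phi.  Induction on time then shows that the law of the x2-trajectory from
   gap m is the Lambda(m, .)-mixture of the laws of the y2-trajectories.  The normalisation
   sum_k Lambda(m, k) = 1, a q-Chu-Vandermonde sum, comes for free: applied to constant functions
   the intertwining relation forces it inductively in m. *)

section \<open>Contiguity relations of \<open>\<phi>\<close>\<close>

lemma mult_power_less_one:
  fixes c q :: real
  assumes "0 \<le> q" "q \<le> 1" "c < 1"
  shows "c * q ^ n < 1"
proof -
  have "0 \<le> q ^ n" "q ^ n \<le> 1" using assms by (simp_all add: power_le_one)
  then show ?thesis using assms(3) by (smt (verit) mult_left_le mult_nonpos_nonneg)
qed

lemma qpoch_Suc: "qpoch a q (Suc k) = qpoch a q k * (1 - a * q ^ k)"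
  by (simp add: qpoch_def)

lemma qpoch_pos:
  assumes "0 \<le> q" "q \<le> 1" "a < 1"
  shows "0 < qpoch a q k"
  by (induction k) (use assms mult_power_less_one in \<open>auto simp: qpoch_Suc qpoch_def\<close>)

lemma phi_Suc_Suc:
  assumes "0 \<le> q" "q < 1" "\<nu> < 1"
  shows "phi q \<mu> \<nu> (Suc j) (Suc (j + n)) * ((1 - \<nu> * q ^ j * q ^ n) * (1 - q * q ^ j))
       = phi q \<mu> \<nu> j (j + n) * ((\<mu> - \<nu> * q ^ j) * (1 - q * q ^ j * q ^ n))"
proof -
  have pos: "0 < qpoch q q k" "0 < qpoch \<nu> q k" for k using assms by (simp_all add: qpoch_pos)
  have "0 < 1 - q * q ^ j" "0 < 1 - \<nu> * q ^ j * q ^ n"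
    using assms mult_power_less_one[of q q j] mult_power_less_one[of q \<nu> "j + n"]
    by (simp_all add: power_add mult.assoc)
  moreover have "phi q \<mu> \<nu> (Suc j) (Suc (j + n)) = phi q \<mu> \<nu> j (j + n) *
      ((\<mu> - \<nu> * q ^ j) * (1 - q * q ^ j * q ^ n) / ((1 - \<nu> * q ^ j * q ^ n) * (1 - q * q ^ j)))"
    using pos[of j] pos[of "j + n"] pos[of n] calculation
    by (simp add: phi_def qpoch_Suc prod.lessThan_Suc power_add field_simps)
  ultimately show ?thesis by simp
qed

lemma phi_Suc_size:
  assumes "0 \<le> q" "q < 1" "\<nu> < 1"
  shows "phi q \<mu> \<nu> j (Suc (j + n)) * ((1 - \<nu> * q ^ j * q ^ n) * (1 - q * q ^ n))
       = phi q \<mu> \<nu> j (j + n) * ((1 - \<mu> * q ^ n) * (1 - q * q ^ j * q ^ n))"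
proof -
  have pos: "0 < qpoch q q k" "0 < qpoch \<nu> q k" for k using assms by (simp_all add: qpoch_pos)
  have "0 < 1 - q * q ^ n" "0 < 1 - \<nu> * q ^ j * q ^ n"
    using assms mult_power_less_one[of q q n] mult_power_less_one[of q \<nu> "j + n"]
    by (simp_all add: power_add mult.assoc)
  moreover have "phi q \<mu> \<nu> j (Suc (j + n)) = phi q \<mu> \<nu> j (j + n) *
      ((1 - \<mu> * q ^ n) * (1 - q * q ^ j * q ^ n) / ((1 - \<nu> * q ^ j * q ^ n) * (1 - q * q ^ n)))"
    using pos[of j] pos[of "j + n"] pos[of n] calculation
    by (simp add: phi_def qpoch_Suc power_add field_simps Suc_diff_le)
  ultimately show ?thesis by simp
qed

section \<open>One step of the two-particle system\<close>

text \<open>\<open>(1 + \<beta> a) (1 + \<beta> b)\<close> times the probability of the jumps \<open>(h0, h1)\<close>, where \<open>a, b\<close> are the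
  squared parameters and \<open>t = q ^ gap\<close>.\<close>
definition step_weight :: "real \<Rightarrow> real \<Rightarrow> real \<Rightarrow> real \<Rightarrow> bool \<Rightarrow> bool \<Rightarrow> real" where
  "step_weight \<beta> a b t h0 h1 = (if h0 then \<beta> * a else 1) *
     (if h0 then (if h1 then b * (\<beta> + t) else 1 - b * t)
      else (if h1 then \<beta> * b * (1 - t) else 1 + \<beta> * b * t))"

lemma step_weight_sum:
  "step_weight \<beta> a b t False False + step_weight \<beta> a b t False True
   + step_weight \<beta> a b t True False + step_weight \<beta> a b t True True = (1 + \<beta> * a) * (1 + \<beta> * b)"
  by (simp add: step_weight_def algebra_simps)

lemma pmf_bind_step:
  fixes x1 x2 :: int
  assumes "0 \<le> q" "q \<le> 1" "0 \<le> \<beta>" "\<sigma>2\<^sup>2 \<le> 1"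
  defines "t \<equiv> q ^ nat (x1 - x2 - 1)"
  shows "pmf (bind_pmf (step \<beta> q \<sigma>1 \<sigma>2 (x1, x2)) f) p * ((1 + \<beta> * \<sigma>1\<^sup>2) * (1 + \<beta> * \<sigma>2\<^sup>2))
       = step_weight \<beta> (\<sigma>1\<^sup>2) (\<sigma>2\<^sup>2) t False False * pmf (f (x1, x2)) p
       + step_weight \<beta> (\<sigma>1\<^sup>2) (\<sigma>2\<^sup>2) t False True * pmf (f (x1, x2 + 1)) p
       + step_weight \<beta> (\<sigma>1\<^sup>2) (\<sigma>2\<^sup>2) t True False * pmf (f (x1 + 1, x2)) p
       + step_weight \<beta> (\<sigma>1\<^sup>2) (\<sigma>2\<^sup>2) t True True * pmf (f (x1 + 1, x2 + 1)) p"
proof -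
  define p0 where "p0 = \<beta> * \<sigma>1\<^sup>2 / (1 + \<beta> * \<sigma>1\<^sup>2)"
  define r1 where "r1 = (\<beta> * \<sigma>2\<^sup>2 + t * \<sigma>2\<^sup>2) / (1 + \<beta> * \<sigma>2\<^sup>2)"
  define r0 where "r0 = \<beta> * \<sigma>2\<^sup>2 * (1 - t) / (1 + \<beta> * \<sigma>2\<^sup>2)"
  have t: "0 \<le> t" "t \<le> 1" using assms by (simp_all add: power_le_one)
  have D: "0 < 1 + \<beta> * \<sigma>1\<^sup>2" "0 < 1 + \<beta> * \<sigma>2\<^sup>2"
    using assms(3) by (simp_all add: add_pos_nonneg)
  have "t * \<sigma>2\<^sup>2 \<le> 1" using t assms(4) by (simp add: mult_le_one)
  moreover have "\<beta> * \<sigma>2\<^sup>2 * (1 - t) \<le> \<beta> * \<sigma>2\<^sup>2"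
    using t assms(3) by (simp add: mult_left_le)
  ultimately have "0 \<le> p0" "p0 \<le> 1" "0 \<le> r1" "r1 \<le> 1" "0 \<le> r0" "r0 \<le> 1"
    using t D assms(3) by (simp_all add: p0_def r1_def r0_def divide_le_eq_1)
  then have "pmf (bind_pmf (step \<beta> q \<sigma>1 \<sigma>2 (x1, x2)) f) p
      = p0 * (r1 * pmf (f (x1 + 1, x2 + 1)) p + (1 - r1) * pmf (f (x1 + 1, x2)) p)
      + (1 - p0) * (r0 * pmf (f (x1, x2 + 1)) p + (1 - r0) * pmf (f (x1, x2)) p)"
    unfolding step_def Let_def fst_conv snd_conv t_def[symmetric] p0_def[symmetric]
      r1_def[symmetric] r0_def[symmetric]
    by (simp add: bind_assoc_pmf bind_return_pmf pmf_bind mult_ac)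
  moreover have "p0 * (1 + \<beta> * \<sigma>1\<^sup>2) = \<beta> * \<sigma>1\<^sup>2" "r1 * (1 + \<beta> * \<sigma>2\<^sup>2) = \<beta> * \<sigma>2\<^sup>2 + t * \<sigma>2\<^sup>2"
    "r0 * (1 + \<beta> * \<sigma>2\<^sup>2) = \<beta> * \<sigma>2\<^sup>2 * (1 - t)"
    using D by (simp_all add: p0_def r1_def r0_def)
  ultimately show ?thesis
    unfolding step_weight_def if_True if_False by algebra
qed

lemma pmf_map_Cons:
  "pmf (map_pmf (Cons c) M) (d # p) = (if d = c then pmf M p else 0)"
  "pmf (map_pmf (Cons c) M) [] = 0"
proof -
  show "pmf (map_pmf (Cons c) M) (d # p) = (if d = c then pmf M p else 0)"
    by (cases "d = c") (simp add: pmf_map_inj', subst pmf_map_outside, auto)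
  show "pmf (map_pmf (Cons c) M) [] = 0"
    by (subst pmf_map_outside) auto
qed

lemma pmf_map_snd_traj_Suc:
  fixes \<beta> q \<sigma>1 \<sigma>2 :: real and x1 x2 :: int
  assumes "0 \<le> q" "q \<le> 1" "0 \<le> \<beta>" "\<sigma>2\<^sup>2 \<le> 1"
  defines "X \<equiv> \<lambda>T s. map_pmf (map snd) (traj \<beta> q \<sigma>1 \<sigma>2 T s)"
    and "W \<equiv> step_weight \<beta> (\<sigma>1\<^sup>2) (\<sigma>2\<^sup>2) (q ^ nat (x1 - x2 - 1))"
  shows "pmf (X (Suc T) (x1, x2)) (c # p) * ((1 + \<beta> * \<sigma>1\<^sup>2) * (1 + \<beta> * \<sigma>2\<^sup>2)) =
     (if c = x2 then W False False * pmf (X T (x1, x2)) p + W False True * pmf (X T (x1, x2 + 1)) p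
        + W True False * pmf (X T (x1 + 1, x2)) p + W True True * pmf (X T (x1 + 1, x2 + 1)) p
      else 0)"
    and "pmf (X (Suc T) (x1, x2)) [] = 0"
proof -
  have X_Suc: "X (Suc T) (x1, x2) = bind_pmf (step \<beta> q \<sigma>1 \<sigma>2 (x1, x2)) (\<lambda>s. map_pmf (Cons x2) (X T s))"
    by (simp add: X_def map_bind_pmf map_pmf_comp)
  show "pmf (X (Suc T) (x1, x2)) (c # p) * ((1 + \<beta> * \<sigma>1\<^sup>2) * (1 + \<beta> * \<sigma>2\<^sup>2)) =
     (if c = x2 then W False False * pmf (X T (x1, x2)) p + W False True * pmf (X T (x1, x2 + 1)) p
        + W True False * pmf (X T (x1 + 1, x2)) p + W True True * pmf (X T (x1 + 1, x2 + 1)) p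
      else 0)"
    unfolding X_Suc pmf_bind_step[OF assms(1-4)] pmf_map_Cons W_def by simp
  show "pmf (X (Suc T) (x1, x2)) [] = 0"
    unfolding X_Suc by (simp add: pmf_bind pmf_map_Cons)
qed

section \<open>Balance identities\<close>

text \<open>In the next four lemmas \<open>u = q ^ j\<close>, \<open>w = q ^ n\<close>, the hypotheses on \<open>K, f0, f1, f2, f3\<close> are
  the contiguity relations between neighbouring values of \<open>\<phi>\<close>, and \<open>b = \<mu> * a\<close> expresses
  \<open>\<mu> = s1\<^sup>2 / s0\<^sup>2\<close>, \<open>\<nu> = b = s1\<^sup>2\<close>.\<close>

lemma step_weight_balance_interior_stay:
  fixes \<beta> a b \<mu> q u w K f1 f2 f3 :: real
  assumes "b = \<mu> * a" "q * w \<noteq> 1" "b * u * w \<noteq> 1"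
    and "f1 * ((1 - b * u * w) * (1 - q * u)) = K * ((\<mu> - b * u) * (1 - q * u * w))"
    and "f2 * ((1 - b * (q * u) * w) * (1 - q * w)) = f1 * ((1 - \<mu> * w) * (1 - q * (q * u) * w))"
    and "f3 * ((1 - b * u * w) * (1 - q * w)) = K * ((1 - \<mu> * w) * (1 - q * u * w))"
  shows "step_weight \<beta> a b (q * u * w) False False * f1 + step_weight \<beta> a b (q * u * w) True False * f2
       = step_weight \<beta> b a (q * u) False False * f1 + step_weight \<beta> b a u True False * f3"
  using assms unfolding step_weight_def if_True if_False by algebra

lemma step_weight_balance_interior_jump:
  fixes \<beta> a b \<mu> q u w K f1 f3 :: real
  assumes "b = \<mu> * a" "q * w \<noteq> 1" "b * u * w \<noteq> 1"
    and "f1 * ((1 - b * u * w) * (1 - q * u)) = K * ((\<mu> - b * u) * (1 - q * u * w))"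
    and "f3 * ((1 - b * u * w) * (1 - q * w)) = K * ((1 - \<mu> * w) * (1 - q * u * w))"
  shows "step_weight \<beta> a b (q * u * w) False True * K + step_weight \<beta> a b (q * u * w) True True * f3
       = step_weight \<beta> b a (q * u) False True * f1 + step_weight \<beta> b a u True True * f3"
  using assms unfolding step_weight_def if_True if_False by algebra

lemma step_weight_balance_bottom:
  fixes \<beta> a b \<mu> q w f0 f1 :: real
  assumes "b = \<mu> * a" "q * w \<noteq> 1" "b * w \<noteq> 1"
    and "f1 * ((1 - b * w) * (1 - q * w)) = f0 * ((1 - \<mu> * w) * (1 - q * w))"
  shows "step_weight \<beta> a b w False False * f0 + step_weight \<beta> a b w True False * f1
       = step_weight \<beta> b a 1 False False * f0"
  using assms unfolding step_weight_def if_True if_False by algebra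

lemma step_weight_balance_top:
  fixes \<beta> a b \<mu> q w f0 f1 :: real
  assumes "b = \<mu> * a" "q * w \<noteq> 1" "b * w \<noteq> 1"
    and "f1 * ((1 - b * w) * (1 - q * w)) = f0 * ((\<mu> - b * w) * (1 - q * w))"
  shows "step_weight \<beta> a b w True False * f1 = step_weight \<beta> b a w True False * f0"
  using assms unfolding step_weight_def if_True if_False by algebra

lemma step_weight_True_True_swap: "step_weight \<beta> a b t True True = step_weight \<beta> b a t True True"
  by (simp add: step_weight_def)

section \<open>Intertwining of the two systems\<close>

lemma sum_int_shift_support:
  fixes f :: "int \<Rightarrow> 'a::comm_monoid_add"
  assumes "0 \<le> e" "M + e \<le> N" "\<And>k. f k \<noteq> 0 \<Longrightarrow> 0 \<le> k \<and> k \<le> M"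
  shows "(\<Sum>k\<in>{0..M}. f k) = (\<Sum>k\<in>{0..N}. f (k - e))"
proof -
  have "(\<Sum>k\<in>{0..M}. f k) = (\<Sum>k\<in>{e..M + e}. f (k - e))"
    by (rule sum.reindex_bij_witness[where i = "\<lambda>k. k - e" and j = "\<lambda>k. k + e"]) auto
  also have "\<dots> = (\<Sum>k\<in>{0..N}. f (k - e))"
    by (rule sum.mono_neutral_left) (use assms in force)+
  finally show ?thesis .
qed

locale two_particle_swap =
  fixes q \<beta> \<sigma>0 \<sigma>1 :: real
  assumes q_nonneg: "0 \<le> q" and q_less_1: "q < 1" and \<beta>_pos: "0 < \<beta>"
    and \<sigma>0_nonzero: "\<sigma>0 \<noteq> 0" and \<sigma>0_sq_less_1: "\<sigma>0\<^sup>2 < 1" and \<sigma>1_sq_less_1: "\<sigma>1\<^sup>2 < 1"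
begin

abbreviation \<mu> :: real where
  "\<mu> \<equiv> \<sigma>1\<^sup>2 / \<sigma>0\<^sup>2"

text \<open>\<open>gap_kernel k m\<close> is the probability that \<open>y1 - x2 - 1 = k\<close> when \<open>x1 - x2 - 1 = m\<close>, extended by
  zero to all integers \<open>k\<close>.\<close>
definition gap_kernel :: "int \<Rightarrow> int \<Rightarrow> real" where
  "gap_kernel k m = (if 0 \<le> k \<and> k \<le> m then phi q \<mu> (\<sigma>1\<^sup>2) (nat k) (nat m) else 0)"

abbreviation x_weight :: "int \<Rightarrow> bool \<Rightarrow> bool \<Rightarrow> real" where
  "x_weight m \<equiv> step_weight \<beta> (\<sigma>0\<^sup>2) (\<sigma>1\<^sup>2) (q ^ nat m)"

abbreviation y_weight :: "int \<Rightarrow> bool \<Rightarrow> bool \<Rightarrow> real" where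
  "y_weight k \<equiv> step_weight \<beta> (\<sigma>1\<^sup>2) (\<sigma>0\<^sup>2) (q ^ nat k)"

abbreviation x2_law :: "nat \<Rightarrow> int \<times> int \<Rightarrow> int list pmf" where
  "x2_law T s \<equiv> map_pmf (map snd) (traj \<beta> q \<sigma>0 \<sigma>1 T s)"

abbreviation y2_law :: "nat \<Rightarrow> int \<times> int \<Rightarrow> int list pmf" where
  "y2_law T s \<equiv> map_pmf (map snd) (traj \<beta> q \<sigma>1 \<sigma>0 T s)"

abbreviation total_weight :: real where
  "total_weight \<equiv> (1 + \<beta> * \<sigma>0\<^sup>2) * (1 + \<beta> * \<sigma>1\<^sup>2)"

lemma total_weight_nonzero: "total_weight \<noteq> 0"
proof -
  have "0 < 1 + \<beta> * \<sigma>0\<^sup>2" "0 < 1 + \<beta> * \<sigma>1\<^sup>2"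
    using \<beta>_pos by (simp_all add: add_pos_nonneg)
  then show ?thesis by simp
qed

lemma x_weight_sum:
  "x_weight m False False + x_weight m False True + x_weight m True False + x_weight m True True
    = total_weight"
  by (simp add: step_weight_sum)

lemma y_weight_sum:
  "y_weight k False False + y_weight k False True + y_weight k True False + y_weight k True True
    = total_weight"
  by (simp add: step_weight_sum)

lemma pmf_x2_law_Suc:
  "pmf (x2_law (Suc T) (x1, x2)) (c # p) * total_weight =
     (if c = x2 then x_weight (x1 - x2 - 1) False False * pmf (x2_law T (x1, x2)) p
        + x_weight (x1 - x2 - 1) False True * pmf (x2_law T (x1, x2 + 1)) p
        + x_weight (x1 - x2 - 1) True False * pmf (x2_law T (x1 + 1, x2)) p
        + x_weight (x1 - x2 - 1) True True * pmf (x2_law T (x1 + 1, x2 + 1)) p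
      else 0)"
  "pmf (x2_law (Suc T) (x1, x2)) [] = 0"
  using pmf_map_snd_traj_Suc[OF q_nonneg less_imp_le[OF q_less_1] less_imp_le[OF \<beta>_pos]
      less_imp_le[OF \<sigma>1_sq_less_1], of \<sigma>0]
  by (simp_all del: traj.simps)

lemma pmf_y2_law_Suc:
  "pmf (y2_law (Suc T) (x2 + 1 + k, x2)) (c # p) * total_weight =
     (if c = x2 then y_weight k False False * pmf (y2_law T (x2 + 1 + k, x2)) p
        + y_weight k False True * pmf (y2_law T (x2 + 1 + k, x2 + 1)) p
        + y_weight k True False * pmf (y2_law T (x2 + 1 + (k + 1), x2)) p
        + y_weight k True True * pmf (y2_law T (x2 + 1 + (k + 1), x2 + 1)) p
      else 0)"
  "pmf (y2_law (Suc T) (x2 + 1 + k, x2)) [] = 0"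
  using pmf_map_snd_traj_Suc[OF q_nonneg less_imp_le[OF q_less_1] less_imp_le[OF \<beta>_pos]
      less_imp_le[OF \<sigma>0_sq_less_1], of \<sigma>1 T "x2 + 1 + k" x2]
  by (simp_all add: mult.commute add_ac del: traj.simps)

lemma \<sigma>1_sq_eq_\<mu>: "\<sigma>1\<^sup>2 = \<mu> * \<sigma>0\<^sup>2"
  using \<sigma>0_nonzero by simp

lemma mult_powers_neq_1:
  "q * q ^ n \<noteq> 1" "\<sigma>1\<^sup>2 * q ^ n \<noteq> 1" "\<sigma>1\<^sup>2 * q ^ j * q ^ n \<noteq> 1"
  using mult_power_less_one[OF q_nonneg _, of q n] mult_power_less_one[OF q_nonneg _ \<sigma>1_sq_less_1, of n]
    mult_power_less_one[OF q_nonneg _ \<sigma>1_sq_less_1, of "j + n"] q_less_1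
  by (auto simp: power_add mult.assoc)

lemmas gap_phi_Suc_Suc = phi_Suc_Suc[OF q_nonneg q_less_1 \<sigma>1_sq_less_1, of \<mu>]
lemmas gap_phi_Suc_size = phi_Suc_size[OF q_nonneg q_less_1 \<sigma>1_sq_less_1, of \<mu>]

lemma gap_kernel_balance_stay:
  assumes "0 \<le> m"
  shows "x_weight m False False * gap_kernel k m + x_weight m True False * gap_kernel k (m + 1)
       = y_weight k False False * gap_kernel k m + y_weight (k - 1) True False * gap_kernel (k - 1) m"
proof -
  consider "k < 0" | "k = 0" | "0 < k" "k \<le> m" | "k = m + 1" | "m + 1 < k" by linarith
  then show ?thesis
  proof cases
    case 2
    obtain n where m: "m = int n" using assms nonneg_eq_int by blast
    have "phi q \<mu> (\<sigma>1\<^sup>2) 0 (Suc n) * ((1 - \<sigma>1\<^sup>2 * q ^ n) * (1 - q * q ^ n))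
        = phi q \<mu> (\<sigma>1\<^sup>2) 0 n * ((1 - \<mu> * q ^ n) * (1 - q * q ^ n))"
      using gap_phi_Suc_size[of 0 n] by (simp only: add_0 power_0 mult_1_right)
    note balance = step_weight_balance_bottom[OF \<sigma>1_sq_eq_\<mu> mult_powers_neq_1(1,2) this, where \<beta> = \<beta>]
    have "nat (m + 1) = Suc n" using m by simp
    then show ?thesis using balance 2 m by (simp add: gap_kernel_def)
  next
    case 3
    define j n where "j = nat (k - 1)" and "n = nat (m - k)"
    have k: "k = int j + 1" and m: "m = int j + 1 + int n"
      using 3 by (simp_all add: j_def n_def)
    have "phi q \<mu> (\<sigma>1\<^sup>2) (Suc j) (Suc (Suc (j + n)))
          * ((1 - \<sigma>1\<^sup>2 * (q * q ^ j) * q ^ n) * (1 - q * q ^ n))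
        = phi q \<mu> (\<sigma>1\<^sup>2) (Suc j) (Suc (j + n)) * ((1 - \<mu> * q ^ n) * (1 - q * (q * q ^ j) * q ^ n))"
      using gap_phi_Suc_size[of "Suc j" n] by (simp only: add_Suc power_Suc)
    note balance = step_weight_balance_interior_stay[OF \<sigma>1_sq_eq_\<mu> mult_powers_neq_1(1,3)
          gap_phi_Suc_Suc[of j n] this gap_phi_Suc_size[of j n], where \<beta> = \<beta>]
    have "nat m = Suc (j + n)" "nat k = Suc j" "nat (m + 1) = Suc (Suc (j + n))" "nat (k - 1) = j"
      using k m by auto
    then show ?thesis
      using balance 3 k m by (simp add: gap_kernel_def power_add mult.assoc)
  next
    case 4
    obtain n where m: "m = int n" using assms nonneg_eq_int by blast
    have "phi q \<mu> (\<sigma>1\<^sup>2) (Suc n) (Suc n) * ((1 - \<sigma>1\<^sup>2 * q ^ n) * (1 - q * q ^ n))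
        = phi q \<mu> (\<sigma>1\<^sup>2) n n * ((\<mu> - \<sigma>1\<^sup>2 * q ^ n) * (1 - q * q ^ n))"
      using gap_phi_Suc_Suc[of n 0] by (simp only: add_0_right power_0 mult_1_right)
    note balance = step_weight_balance_top[OF \<sigma>1_sq_eq_\<mu> mult_powers_neq_1(1,2) this, where \<beta> = \<beta>]
    have "nat (m + 1) = Suc n" using m by simp
    then show ?thesis using balance 4 m by (simp add: gap_kernel_def)
  qed (simp_all add: gap_kernel_def)
qed

lemma gap_kernel_balance_jump:
  assumes "0 \<le> m"
  shows "x_weight m False True * gap_kernel (k - 1) (m - 1) + x_weight m True True * gap_kernel (k - 1) m
       = y_weight k False True * gap_kernel k m + y_weight (k - 1) True True * gap_kernel (k - 1) m"
proof -
  consider "k \<le> 0" | "0 < k" "k \<le> m" | "k = m + 1" | "m + 1 < k" by linarith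
  then show ?thesis
  proof cases
    case 1
    then show ?thesis by (auto simp: gap_kernel_def step_weight_def)
  next
    case 2
    define j n where "j = nat (k - 1)" and "n = nat (m - k)"
    have k: "k = int j + 1" and m: "m = int j + 1 + int n"
      using 2 by (simp_all add: j_def n_def)
    note balance = step_weight_balance_interior_jump[OF \<sigma>1_sq_eq_\<mu> mult_powers_neq_1(1,3)
          gap_phi_Suc_Suc[of j n] gap_phi_Suc_size[of j n], where \<beta> = \<beta>]
    have "nat m = Suc (j + n)" "nat k = Suc j" "nat (m - 1) = j + n" "nat (k - 1) = j"
      using k m by auto
    then show ?thesis
      using balance 2 k m by (simp add: gap_kernel_def power_add mult.assoc)
  next
    case 3
    then show ?thesis by (simp add: gap_kernel_def step_weight_True_True_swap)
  qed (simp add: gap_kernel_def)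
qed

lemma gap_kernel_intertwining:
  fixes g0 g1 :: "int \<Rightarrow> real"
  assumes "0 \<le> m"
  shows "x_weight m False False * (\<Sum>k\<in>{0..m}. gap_kernel k m * g0 k)
       + x_weight m False True * (\<Sum>k\<in>{0..m - 1}. gap_kernel k (m - 1) * g1 (k + 1))
       + x_weight m True False * (\<Sum>k\<in>{0..m + 1}. gap_kernel k (m + 1) * g0 k)
       + x_weight m True True * (\<Sum>k\<in>{0..m}. gap_kernel k m * g1 (k + 1))
     = (\<Sum>k\<in>{0..m}. gap_kernel k m * (y_weight k False False * g0 k + y_weight k False True * g1 k
          + y_weight k True False * g0 (k + 1) + y_weight k True True * g1 (k + 1)))"
proof -
  have shift: "(\<Sum>k\<in>{0..M}. gap_kernel k M * g k) = (\<Sum>k\<in>{0..m + 1}. gap_kernel (k - e) M * g (k - e))"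
    if "0 \<le> e" "M + e \<le> m + 1" for M e and g :: "int \<Rightarrow> real"
    by (rule sum_int_shift_support) (use that in \<open>auto simp: gap_kernel_def split: if_splits\<close>)
  have "x_weight m False False * (\<Sum>k\<in>{0..m}. gap_kernel k m * g0 k)
       + x_weight m False True * (\<Sum>k\<in>{0..m - 1}. gap_kernel k (m - 1) * g1 (k + 1))
       + x_weight m True False * (\<Sum>k\<in>{0..m + 1}. gap_kernel k (m + 1) * g0 k)
       + x_weight m True True * (\<Sum>k\<in>{0..m}. gap_kernel k m * g1 (k + 1))
     = (\<Sum>k\<in>{0..m + 1}. x_weight m False False * (gap_kernel k m * g0 k)
       + x_weight m False True * (gap_kernel (k - 1) (m - 1) * g1 k)
       + x_weight m True False * (gap_kernel k (m + 1) * g0 k)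
       + x_weight m True True * (gap_kernel (k - 1) m * g1 k))"
    using shift[of 0 m g0] shift[of 1 "m - 1" "\<lambda>k. g1 (k + 1)"] shift[of 1 m "\<lambda>k. g1 (k + 1)"] assms
    by (simp add: sum.distrib sum_distrib_left)
  also have "\<dots> = (\<Sum>k\<in>{0..m + 1}.
         gap_kernel k m * (y_weight k False False * g0 k + y_weight k False True * g1 k)
       + gap_kernel (k - 1) m * (y_weight (k - 1) True False * g0 k + y_weight (k - 1) True True * g1 k))"
  proof (rule sum.cong)
    fix k
    show "x_weight m False False * (gap_kernel k m * g0 k)
       + x_weight m False True * (gap_kernel (k - 1) (m - 1) * g1 k)
       + x_weight m True False * (gap_kernel k (m + 1) * g0 k)
       + x_weight m True True * (gap_kernel (k - 1) m * g1 k)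
       = gap_kernel k m * (y_weight k False False * g0 k + y_weight k False True * g1 k)
       + gap_kernel (k - 1) m * (y_weight (k - 1) True False * g0 k + y_weight (k - 1) True True * g1 k)"
      using gap_kernel_balance_stay[OF assms, of k] gap_kernel_balance_jump[OF assms, of k] by algebra
  qed simp
  also have "\<dots> = (\<Sum>k\<in>{0..m}. gap_kernel k m
         * (y_weight k False False * g0 k + y_weight k False True * g1 k
          + y_weight k True False * g0 (k + 1) + y_weight k True True * g1 (k + 1)))"
    using shift[of 0 m "\<lambda>k. y_weight k False False * g0 k + y_weight k False True * g1 k"]
      shift[of 1 m "\<lambda>k. y_weight k True False * g0 (k + 1) + y_weight k True True * g1 (k + 1)"] assms
    by (simp add: sum.distrib distrib_left add.assoc)
  finally show ?thesis .
qed

text \<open>Applied to constant functions, the intertwining relation forces normalisation, because the step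
  weights of both chains have the same total.\<close>
lemma sum_gap_kernel_Suc:
  assumes "0 \<le> m" and "(\<Sum>k\<in>{0..m}. gap_kernel k m) = 1"
    and "m = 0 \<or> (\<Sum>k\<in>{0..m - 1}. gap_kernel k (m - 1)) = 1"
  shows "(\<Sum>k\<in>{0..m + 1}. gap_kernel k (m + 1)) = 1"
proof -
  have "x_weight m False True * (\<Sum>k\<in>{0..m - 1}. gap_kernel k (m - 1)) = x_weight m False True"
    using assms(3) by (auto simp: step_weight_def)
  moreover have "x_weight m False False + x_weight m False True * (\<Sum>k\<in>{0..m - 1}. gap_kernel k (m - 1))
      + x_weight m True False * (\<Sum>k\<in>{0..m + 1}. gap_kernel k (m + 1)) + x_weight m True True
    = (\<Sum>k\<in>{0..m}. gap_kernel k m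
        * (y_weight k False False + y_weight k False True + y_weight k True False + y_weight k True True))"
    using gap_kernel_intertwining[OF assms(1), of "\<lambda>_. 1" "\<lambda>_. 1"] assms(2) by simp
  moreover have "\<dots> = total_weight"
    using assms(2) by (simp add: y_weight_sum flip: sum_distrib_right)
  ultimately have "x_weight m True False * (\<Sum>k\<in>{0..m + 1}. gap_kernel k (m + 1)) = x_weight m True False"
    using x_weight_sum[of m] by linarith
  moreover have "x_weight m True False \<noteq> 0"
    using \<beta>_pos \<sigma>0_nonzero mult_powers_neq_1(2)[of "nat m"] by (simp add: step_weight_def)
  ultimately show ?thesis by simp
qed

lemma sum_gap_kernel:
  assumes "0 \<le> m"
  shows "(\<Sum>k\<in>{0..m}. gap_kernel k m) = 1"
proof -
  have "(\<Sum>k\<in>{0..int n}. gap_kernel k (int n)) = 1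
      \<and> (\<Sum>k\<in>{0..int n + 1}. gap_kernel k (int n + 1)) = 1" for n
  proof (induction n)
    case 0
    have "(\<Sum>k\<in>{0..0}. gap_kernel k 0) = 1" by (simp add: gap_kernel_def phi_def qpoch_def)
    then show ?case using sum_gap_kernel_Suc[of 0] by simp
  next
    case (Suc n)
    then show ?case using sum_gap_kernel_Suc[of "int n + 1"] by (simp add: add.commute)
  qed
  then show ?thesis using assms nonneg_eq_int by metis
qed

lemma pmf_x2_law_eq_mixture:
  assumes "x2 < x1"
  shows "pmf (x2_law T (x1, x2)) p
    = (\<Sum>k\<in>{0..x1 - x2 - 1}. gap_kernel k (x1 - x2 - 1) * pmf (y2_law T (x2 + 1 + k, x2)) p)"
  using assms
proof (induction T arbitrary: x1 x2 p)
  case 0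
  then show ?case by (simp add: sum_gap_kernel flip: sum_distrib_right)
next
  case (Suc T)
  define m where "m = x1 - x2 - 1"
  have "0 \<le> m" using Suc.prems by (simp add: m_def)
  show ?case
  proof (cases p)
    case Nil
    then show ?thesis by (simp add: pmf_x2_law_Suc(2) pmf_y2_law_Suc(2) del: traj.simps)
  next
    case (Cons c p')
    define g0 where "g0 k = pmf (y2_law T (x2 + 1 + k, x2)) p'" for k
    define g1 where "g1 k = pmf (y2_law T (x2 + 1 + k, x2 + 1)) p'" for k
    have IH: "pmf (x2_law T (x1, x2)) p' = (\<Sum>k\<in>{0..m}. gap_kernel k m * g0 k)"
      "pmf (x2_law T (x1 + 1, x2)) p' = (\<Sum>k\<in>{0..m + 1}. gap_kernel k (m + 1) * g0 k)"
      "pmf (x2_law T (x1 + 1, x2 + 1)) p' = (\<Sum>k\<in>{0..m}. gap_kernel k m * g1 (k + 1))"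
      using Suc.IH[of x2 x1] Suc.IH[of x2 "x1 + 1"] Suc.IH[of "x2 + 1" "x1 + 1"] Suc.prems
      by (simp_all add: m_def g0_def g1_def algebra_simps)
    have IH_jump: "x_weight m False True * pmf (x2_law T (x1, x2 + 1)) p'
        = x_weight m False True * (\<Sum>k\<in>{0..m - 1}. gap_kernel k (m - 1) * g1 (k + 1))"
    proof (cases "m = 0")
      case True
      then show ?thesis by (simp add: step_weight_def)
    next
      case False
      then show ?thesis
        using Suc.IH[of "x2 + 1" x1] \<open>0 \<le> m\<close> by (simp add: m_def g1_def algebra_simps)
    qed
    have "pmf (x2_law (Suc T) (x1, x2)) p * total_weight
        = (\<Sum>k\<in>{0..m}. gap_kernel k m * (pmf (y2_law (Suc T) (x2 + 1 + k, x2)) p * total_weight))"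
      unfolding Cons pmf_x2_law_Suc(1) pmf_y2_law_Suc(1) m_def[symmetric] IH IH_jump
      using gap_kernel_intertwining[OF \<open>0 \<le> m\<close>, of g0 g1] by (simp add: g0_def g1_def add.assoc)
    also have "\<dots> = (\<Sum>k\<in>{0..m}. gap_kernel k m * pmf (y2_law (Suc T) (x2 + 1 + k, x2)) p) * total_weight"
      by (simp add: sum_distrib_right mult.assoc del: traj.simps)
    finally show ?thesis
      unfolding mult_right_cancel[OF total_weight_nonzero] m_def .
  qed
qed

theorem map_snd_traj_eq_mixture:
  fixes init :: "int pmf"
  assumes "x20 < x10"
    and init: "\<And>y. pmf init y = (if x20 < y \<and> y \<le> x10
                 then phi q \<mu> (\<sigma>1\<^sup>2) (nat (y - x20 - 1)) (nat (x10 - x20 - 1)) else 0)"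
  shows "x2_law T (x10, x20) = map_pmf (map snd) (bind_pmf init (\<lambda>y. traj \<beta> q \<sigma>1 \<sigma>0 T (y, x20)))"
proof (rule pmf_eqI)
  fix p
  define m where "m = x10 - x20 - 1"
  have "pmf (map_pmf (map snd) (bind_pmf init (\<lambda>y. traj \<beta> q \<sigma>1 \<sigma>0 T (y, x20)))) p
      = measure_pmf.expectation init (\<lambda>y. pmf (y2_law T (y, x20)) p)"
    by (simp add: map_bind_pmf pmf_bind)
  also have "\<dots> = (\<Sum>y\<in>{x20 + 1..x10}. pmf init y * pmf (y2_law T (y, x20)) p)"
    by (subst integral_measure_pmf[where A = "{x20 + 1..x10}"])
      (auto simp: set_pmf_iff init split: if_splits)
  also have "\<dots> = (\<Sum>k\<in>{0..m}. gap_kernel k m * pmf (y2_law T (x20 + 1 + k, x20)) p)"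
    by (rule sum.reindex_bij_witness[where i = "\<lambda>k. x20 + 1 + k" and j = "\<lambda>y. y - x20 - 1"])
      (auto simp: init gap_kernel_def m_def)
  also have "\<dots> = pmf (x2_law T (x10, x20)) p"
    using pmf_x2_law_eq_mixture[OF assms(1)] by (simp add: m_def)
  finally show "pmf (x2_law T (x10, x20)) p
      = pmf (map_pmf (map snd) (bind_pmf init (\<lambda>y. traj \<beta> q \<sigma>1 \<sigma>0 T (y, x20)))) p" ..
qed

end

theorem corollary8p5:
  fixes q \<beta> s0 s1 :: real and x10 x20 :: int and init :: "int pmf"
  assumes "0 \<le> q" "q < 1" "\<beta> > 0"
    and "-1 < s0" "s0 < 0" "-1 < s1" "s1 < 0" "\<bar>s0\<bar> > \<bar>s1\<bar>"
    and "x10 > x20"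
    and init: "\<And>y. pmf init y =
       (if x20 < y \<and> y \<le> x10
        then phi q (s1\<^sup>2 / s0\<^sup>2) (s1\<^sup>2) (nat (y - x20 - 1)) (nat (x10 - x20 - 1))
        else 0)"
  shows "\<forall>T. map_pmf (map snd) (traj \<beta> q s0 s1 T (x10, x20)) =
             map_pmf (map snd) (bind_pmf init (\<lambda>y. traj \<beta> q s1 s0 T (y, x20)))"
proof
  fix T
  interpret two_particle_swap q \<beta> s0 s1
    using assms(1-7) by unfold_locales (simp_all add: abs_square_less_1)
  show "map_pmf (map snd) (traj \<beta> q s0 s1 T (x10, x20)) =
      map_pmf (map snd) (bind_pmf init (\<lambda>y. traj \<beta> q s1 s0 T (y, x20)))"
    by (rule map_snd_traj_eq_mixture[OF assms(9) init])
qed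

end
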